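(* Under Assumption 1, almost surely, for all sufficiently large $N^*$ the true partition $\mathcal{X}^*$ is the unique minimizer of $D(\mathcal{Y})=D_1(\mathcal{Y})+D_2(\mathcal{Y})$ over all partitions $\mathcal{Y}$ of $X$; that is, $\hat{\mathcal{X}}=\arg\min_{\mathcal{Y}\in\mathscr{X}}D(\mathcal{Y})$ converges almost surely to $\mathcal{X}^*$ as $N^*\to\infty$.
   Context: $X$ is finite, $\mathscr{A}$ the nonempty subsets of $X$, $\mathscr{X}$ the set of all partitions of $X$. The true choice probabilities $\bar p$ form a nondegenerate NSC with representation $(v,u,\mathcal{X}^* )$, $\mathcal{X}^*=\{X_1,\dots,X_K\}$, $K\ge2$: $\bar p(a,A)=\frac{v(A\cap X_i)}{\sum_j v(A\cap X_j)}\frac{u(a)}{\sum_{b\in A\cap X_i}u(b)}$ for $a\in A\cap X_i$, with $u>0$, $v(\emptyset)=0$, $\bar p>0$ on $\{(a,A):a\in A\}$; nondegenerate means at most one $i$ for which some $a\in X_i$ satisfies $\frac{\sum_{x\in A_i}u(x)}{v(A_i)}=\frac{u(a)}{v(\{a\})}$ for all $A_i\subseteq X_i$ containing $a$. Data: for each menu $A$, $N_A$ independent observed choices from $A$, each drawn according to $\bar p(\cdot,A)$, independent across menus; $p(a,A)$ is the observed frequency of $a$ among the $N_A$ choices from $A$. $N^*=\min_{A\in\mathscr{A}}N_A$, and asymptotic statements refer to $N^*\to\infty$ (sample sizes increasing along nested samples). For $A'\subseteq X$ write $p(A',A)=\sum_{a\in A'}p(a,A)$, $r_A(A',B')=p(A',A)/p(B',A)$,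 and $\bar r_A(A',B')=\bar p(A',A)/\bar p(B',A)$; $r_A(a,b)=r_A(\{a\},\{b\})$. For $\mathcal{Y}\in\mathscr{X}$: $D_1(\mathcal{Y})$ is the average, over all tuples $(Y,A,B,a,b)$ with $Y\in\mathcal{Y}$, $A,B\in\mathscr{A}$, $a,b\in A\cap B\cap Y$, of $\big(\log r_A(a,b)-\log r_B(a,b)\big)^2$ (sum divided by the number of such tuples). $D_2(\mathcal{Y})$ is the average, over all tuples $(Y,Y',A,B)$ with $Y,Y'\in\mathcal{Y}$, $A,B\in\mathscr{A}$, $A\cap Y=B\cap Y\ne\emptyset$, $A\cap Y'=B\cap Y'\ne\emptyset$, of $\big(\log r_A(Y,Y')-\log r_B(Y,Y')\big)^2$. ($D$ is defined whenever all observed frequencies are positive, which holds almost surely for large $N^*$.) Assumption 1: for all distinct $i,j\le K$, every nonempty $A_i\subsetneq X_i$ and every nonempty $A_j\subseteq X_j$, there exist $A,B\in\mathscr{A}$ with $A_i\cup A_j\subseteq A\cap B$ and $\bar r_A(A_i,A_j)\ne\bar r_B(A_i,A_j)$. *)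

theory Defs
  imports "HOL-Probability.Probability" "HOL-Library.Disjoint_Sets"
begin

definition menus :: "'a set \<Rightarrow> 'a set set" where
  "menus X = {A. A \<subseteq> X \<and> A \<noteq> {}}"

definition block_of :: "'a set set \<Rightarrow> 'a \<Rightarrow> 'a set" where
  "block_of P a = (THE Y. Y \<in> P \<and> a \<in> Y)"

definition nsc :: "'a set set \<Rightarrow> ('a set \<Rightarrow> real) \<Rightarrow> ('a \<Rightarrow> real) \<Rightarrow> 'a \<Rightarrow> 'a set \<Rightarrow> real" where
  "nsc P v u a A =
     (if a \<in> A then
        v (A \<inter> block_of P a) / (\<Sum>Y\<in>P. v (A \<inter> Y))
        * (u a / (\<Sum>b\<in>A \<inter> block_of P a. u b))
      else 0)"

definition degenerate_block :: "('a set \<Rightarrow> real) \<Rightarrow> ('a \<Rightarrow> real) \<Rightarrow> 'a set \<Rightarrow> bool" where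
  "degenerate_block v u Xi \<longleftrightarrow>
     (\<exists>a\<in>Xi. \<forall>Ai. Ai \<subseteq> Xi \<and> a \<in> Ai \<longrightarrow> (\<Sum>x\<in>Ai. u x) / v Ai = u a / v {a})"

definition nondegenerate :: "'a set set \<Rightarrow> ('a set \<Rightarrow> real) \<Rightarrow> ('a \<Rightarrow> real) \<Rightarrow> bool" where
  "nondegenerate P v u \<longleftrightarrow> card {Xi \<in> P. degenerate_block v u Xi} \<le> 1"

definition setp :: "('a \<Rightarrow> 'a set \<Rightarrow> real) \<Rightarrow> 'a set \<Rightarrow> 'a set \<Rightarrow> real" where
  "setp p B A = (\<Sum>a\<in>B. p a A)"

definition ratio :: "('a \<Rightarrow> 'a set \<Rightarrow> real) \<Rightarrow> 'a set \<Rightarrow> 'a set \<Rightarrow> 'a set \<Rightarrow> real" where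
  "ratio p A B C = setp p B A / setp p C A"

definition assumption1 :: "'a set \<Rightarrow> 'a set set \<Rightarrow> ('a \<Rightarrow> 'a set \<Rightarrow> real) \<Rightarrow> bool" where
  "assumption1 X P pbar \<longleftrightarrow>
    (\<forall>Xi\<in>P. \<forall>Xj\<in>P. Xi \<noteq> Xj \<longrightarrow>
       (\<forall>Ai Aj. Ai \<noteq> {} \<and> Ai \<subset> Xi \<and> Aj \<noteq> {} \<and> Aj \<subseteq> Xj \<longrightarrow>
          (\<exists>A\<in>menus X. \<exists>B\<in>menus X. Ai \<union> Aj \<subseteq> A \<inter> B \<and>
              ratio pbar A Ai Aj \<noteq> ratio pbar B Ai Aj)))"

definition D1 :: "'a set \<Rightarrow> ('a \<Rightarrow> 'a set \<Rightarrow> real) \<Rightarrow> 'a set set \<Rightarrow> real" where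
  "D1 X p Q =
    (let T = {(Y, A, B, a, b). Y \<in> Q \<and> A \<in> menus X \<and> B \<in> menus X \<and>
                 a \<in> A \<inter> B \<inter> Y \<and> b \<in> A \<inter> B \<inter> Y}
     in (\<Sum>(Y, A, B, a, b)\<in>T. (ln (ratio p A {a} {b}) - ln (ratio p B {a} {b}))^2) / real (card T))"

definition D2 :: "'a set \<Rightarrow> ('a \<Rightarrow> 'a set \<Rightarrow> real) \<Rightarrow> 'a set set \<Rightarrow> real" where
  "D2 X p Q =
    (let T = {(Y, Y', A, B). Y \<in> Q \<and> Y' \<in> Q \<and> A \<in> menus X \<and> B \<in> menus X \<and>
                 A \<inter> Y = B \<inter> Y \<and> A \<inter> Y \<noteq> {} \<and> A \<inter> Y' = B \<inter> Y' \<and> A \<inter> Y' \<noteq> {}}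
     in (\<Sum>(Y, Y', A, B)\<in>T. (ln (ratio p A Y Y') - ln (ratio p B Y Y'))^2) / real (card T))"

definition D :: "'a set \<Rightarrow> ('a \<Rightarrow> 'a set \<Rightarrow> real) \<Rightarrow> 'a set set \<Rightarrow> real" where
  "D X p Q = D1 X p Q + D2 X p Q"

(* Observed frequency of a among the first N A draws xi A 0, ..., xi A (N A - 1) from menu A *)
definition freq :: "('a set \<Rightarrow> nat \<Rightarrow> 'w \<Rightarrow> 'a) \<Rightarrow> ('a set \<Rightarrow> nat) \<Rightarrow> 'w \<Rightarrow> 'a \<Rightarrow> 'a set \<Rightarrow> real" where
  "freq xi N w a A = real (card {n. n < N A \<and> xi A n w = a}) / real (N A)"

end

theory Submission
  imports Defs
begin

text \<open>At the true choice probabilities the discrepancy vanishes on the true partition: inside a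
block the odds of two alternatives are \<open>u a / u b\<close>, and the odds of two blocks
\<open>Y, Y'\<close> are \<open>v (A \<inter> Y) / v (A \<inter> Y')\<close>, which only depend on the traces of the menu.
For any other partition \<open>Q\<close> the discrepancy is strictly positive. If a block of \<open>Q\<close>
meets two true blocks, Assumption 1 yields two menus on which the odds of two of its alternatives
differ (nondegeneracy rules out that both true blocks are singletons), so \<open>D\<^sub>1 > 0\<close>;
otherwise \<open>Q\<close> strictly refines the true partition, some block of \<open>Q\<close> lies properly inside
a true block, and Assumption 1 gives \<open>D\<^sub>2 > 0\<close>. Hoeffding's inequality and Borel-Cantelli
make the observed frequencies converge almost surely; \<open>D\<close> is continuous at the true
probabilities and there are only finitely many partitions, so these strict inequalities persist
once all sample sizes are large.\<close>

section \<open>Strong law of large numbers for empirical frequencies\<close>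

lemma (in prob_space) AE_tendsto_if_summable_deviation:
  fixes Y :: "nat \<Rightarrow> 'a \<Rightarrow> real"
  assumes [measurable]: "\<And>n. Y n \<in> borel_measurable M"
    and summable: "\<And>e. e > 0 \<Longrightarrow> summable (\<lambda>n. prob {w \<in> space M. e \<le> \<bar>Y n w - c\<bar>})"
  shows "AE w in M. (\<lambda>n. Y n w) \<longlonglongrightarrow> c"
proof -
  have "AE w in M. eventually (\<lambda>n. \<bar>Y n w - c\<bar> < e) sequentially" if "e > 0" for e
  proof -
    have "AE w in M. eventually (\<lambda>n. w \<in> space M - {w \<in> space M. e \<le> \<bar>Y n w - c\<bar>}) sequentially"
      by (rule borel_cantelli_AE1) (use summable[OF that] in \<open>auto simp: emeasure_eq_measure\<close>)
    then show ?thesis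
      by (rule eventually_mono) (auto elim: eventually_mono)
  qed
  then have "AE w in M. \<forall>m. eventually (\<lambda>n. \<bar>Y n w - c\<bar> < 1 / Suc m) sequentially"
    by (subst AE_all_countable) auto
  then show ?thesis
  proof (rule eventually_mono)
    fix w assume close: "\<forall>m. eventually (\<lambda>n. \<bar>Y n w - c\<bar> < 1 / Suc m) sequentially"
    show "(\<lambda>n. Y n w) \<longlonglongrightarrow> c"
    proof (rule tendstoI)
      fix e :: real assume "e > 0"
      then obtain m where "1 / Suc m < e" by (rule nat_approx_posE)
      with close show "eventually (\<lambda>n. dist (Y n w) c < e) sequentially"
        by (auto simp: dist_real_def elim!: allE[of _ m] eventually_mono)
    qed
  qed
qed

lemma card_eq_sum_indicator:
  fixes n :: nat
  shows "real (card {k. k < n \<and> f k = s}) = (\<Sum>k<n. indicator {s} (f k))"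
proof -
  have "{k. k < n \<and> f k = s} = {..<n} \<inter> {k. f k = s}"
    by auto
  then show ?thesis
    by (simp add: indicator_def)
qed

text \<open>The bound is stated for all \<open>n\<close>, trivially for \<open>n = 0\<close>, so that it can be compared
  with a geometric series.\<close>

lemma (in prob_space) prob_frequency_deviation_le:
  fixes Z :: "'i \<Rightarrow> 'a \<Rightarrow> 'b" and g :: "nat \<Rightarrow> 'i"
  assumes indep: "indep_vars (\<lambda>_. count_space S) Z I"
    and g: "inj g" "range g \<subseteq> I"
    and q: "\<And>k. prob {w \<in> space M. Z (g k) w = s} = q"
    and e: "e > 0"
  shows "prob {w \<in> space M. e \<le> \<bar>card {k. k < n \<and> Z (g k) w = s} / n - q\<bar>} \<le> 2 * exp (-2 * e\<^sup>2) ^ n"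
proof (cases "n = 0")
  case True
  then show ?thesis by (simp add: order.trans[OF prob_le_1])
next
  case False
  define F :: "'i \<Rightarrow> 'a \<Rightarrow> real" where "F i w = indicator {s} (Z i w)" for i w
  let ?J = "g ` {..<n}"
  have indF: "indep_vars (\<lambda>_. borel) F I"
    unfolding F_def by (rule indep_vars_compose2[OF indep]) auto
  have EF: "expectation (F (g k)) = q" for k
  proof -
    have "Z (g k) \<in> measurable M (count_space S)"
      using indep g unfolding indep_vars_def by blast
    then have "{w \<in> space M. Z (g k) w = s} \<in> events"
      by measurable
    moreover have "expectation (F (g k)) = expectation (indicator {w \<in> space M. Z (g k) w = s})"
      by (rule Bochner_Integration.integral_cong) (auto simp: F_def indicator_def)
    ultimately show ?thesis
      using q[of k] by simp
  qed
  interpret H: Hoeffding_ineq M ?J F "\<lambda>_. 0" "\<lambda>_. 1" "\<Sum>i\<in>?J. expectation (F i)"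
  proof unfold_locales
    show "indep_vars (\<lambda>_. borel) F ?J"
      by (rule indep_vars_subset[OF indF]) (use g in auto)
  qed (auto simp: F_def)
  have card_J: "card ?J = n"
    using g by (simp add: card_image inj_on_def)
  have count: "(\<Sum>i\<in>?J. F i w) = card {k. k < n \<and> Z (g k) w = s}" for w
  proof -
    have "(\<Sum>i\<in>?J. F i w) = (\<Sum>k<n. F (g k) w)"
      using g by (simp add: sum.reindex inj_on_def)
    also have "\<dots> = card {k. k < n \<and> Z (g k) w = s}"
      by (simp add: F_def card_eq_sum_indicator)
    finally show ?thesis .
  qed
  have mean: "(\<Sum>i\<in>?J. expectation (F i)) = n * q"
    using g by (simp add: sum.reindex inj_on_def EF)
  have "{w \<in> space M. e \<le> \<bar>card {k. k < n \<and> Z (g k) w = s} / n - q\<bar>}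
      = {w \<in> space M. \<bar>(\<Sum>i\<in>?J. F i w) - (\<Sum>i\<in>?J. expectation (F i))\<bar> \<ge> e * n}"
    using False by (auto simp: count mean field_simps abs_minus_commute
        abs_divide[symmetric] simp flip: abs_mult)
  also have "prob \<dots> \<le> 2 * exp (-2 * (e * n)\<^sup>2 / (\<Sum>i\<in>?J. (1 - 0)\<^sup>2))"
    by (rule H.Hoeffding_ineq_abs_ge) (use e False card_J in auto)
  also have "\<dots> = 2 * exp (-2 * e\<^sup>2) ^ n"
    using False card_J by (simp add: power2_eq_square exp_of_nat_mult[symmetric])
  finally show ?thesis .
qed


theorem (in prob_space) AE_frequency_tendsto:
  fixes Z :: "'i \<Rightarrow> 'a \<Rightarrow> 'b" and g :: "nat \<Rightarrow> 'i"
  assumes indep: "indep_vars (\<lambda>_. count_space S) Z I"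
    and g: "inj g" "range g \<subseteq> I"
    and q: "\<And>k. prob {w \<in> space M. Z (g k) w = s} = q"
  shows "AE w in M. (\<lambda>n. card {k. k < n \<and> Z (g k) w = s} / n) \<longlonglongrightarrow> q"
proof -
  have "Z (g k) \<in> measurable M (count_space S)" for k
    using indep g unfolding indep_vars_def by blast
  then have [measurable]: "(\<lambda>w. indicator {s} (Z (g k) w) :: real) \<in> borel_measurable M" for k
    by (rule measurable_compose) (simp add: measurable_count_space_eq1)
  have "(\<lambda>w. card {k. k < n \<and> Z (g k) w = s} / n) \<in> borel_measurable M" for n :: nat
    unfolding card_eq_sum_indicator by measurable
  moreover have "summable (\<lambda>n. prob {w \<in> space M. e \<le> \<bar>card {k. k < n \<and> Z (g k) w = s} / n - q\<bar>})"
    if "e > 0" for e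
  proof (rule summable_comparison_test')
    show "summable (\<lambda>n. 2 * exp (-2 * e\<^sup>2) ^ n)"
      by (intro summable_mult summable_geometric) (use that in auto)
    show "norm (prob {w \<in> space M. e \<le> \<bar>card {k. k < n \<and> Z (g k) w = s} / n - q\<bar>})
        \<le> 2 * exp (-2 * e\<^sup>2) ^ n" for n
      using prob_frequency_deviation_le[OF indep g q that] by simp
  qed
  ultimately show ?thesis
    by (rule AE_tendsto_if_summable_deviation)
qed

lemma (in prob_space) prob_eq_0_if_sum_prob_eq_1:
  assumes Z: "Z \<in> measurable M (count_space S)" and B: "finite B" "a \<notin> B"
    and sum1: "(\<Sum>b\<in>B. prob {w \<in> space M. Z w = b}) = 1"
  shows "prob {w \<in> space M. Z w = a} = 0"
proof -
  have events: "{w \<in> space M. Z w = b} \<in> events" for b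
    using Z by measurable
  have "prob {w \<in> space M. Z w = a} + 1 = (\<Sum>b\<in>insert a B. prob {w \<in> space M. Z w = b})"
    using B sum1 by simp
  also have "\<dots> = prob (\<Union>b\<in>insert a B. {w \<in> space M. Z w = b})"
    by (rule finite_measure_finite_Union[symmetric]) (use B in \<open>auto simp: events disjoint_family_on_def\<close>)
  also have "\<dots> \<le> 1"
    by (rule prob_le_1)
  finally show ?thesis
    using measure_nonneg[of M "{w \<in> space M. Z w = a}"] by linarith
qed

text \<open>Along this filter on sample-size profiles \<open>N\<close> the smallest sample size
  \<open>N\<^sup>* = Min (N ` S)\<close> tends to infinity.\<close>

lemma filterlim_filtercomap_Min_at_top:
  fixes S :: "'i set"
  assumes "finite S" "i \<in> S"
  shows "filterlim (\<lambda>N. N i) at_top (filtercomap (\<lambda>N. Min (N ` S)) at_top)"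
proof -
  have "filterlim (\<lambda>N. Min (N ` S)) at_top (filtercomap (\<lambda>N. Min (N ` S)) at_top)"
    by (rule filterlim_filtercomap)
  then show ?thesis
    by (rule filterlim_at_top_mono) (use assms in simp)
qed

lemma eventually_filtercomap_Min_at_top:
  fixes S :: "'i set"
  assumes "finite S" "S \<noteq> {}"
    and "eventually P (filtercomap (\<lambda>N :: 'i \<Rightarrow> nat. Min (N ` S)) at_top)"
  shows "\<exists>n0. \<forall>N. (\<forall>i\<in>S. n0 \<le> N i) \<longrightarrow> P N"
proof -
  obtain R where "eventually R at_top" and R: "\<And>N. R (Min (N ` S)) \<Longrightarrow> P N"
    using assms(3) unfolding eventually_filtercomap by blast
  then obtain n0 where "\<And>n. n0 \<le> n \<Longrightarrow> R n"
    unfolding eventually_at_top_linorder by blast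
  then show ?thesis
    using assms(1,2) by (intro exI[of _ n0] allI impI R) simp
qed

section \<open>The discrepancy between partitions\<close>

lemma menus_finite: "finite X \<Longrightarrow> finite (menus X)"
  unfolding menus_def by (rule finite_subset[of _ "Pow X"]) auto

lemma sum_divide_card_gt_0:
  fixes f :: "'b \<Rightarrow> real"
  assumes "finite T" "t \<in> T" "\<And>x. x \<in> T \<Longrightarrow> 0 \<le> f x" "0 < f t"
  shows "0 < sum f T / card T"
proof -
  have "0 < sum f T"
    by (rule sum_pos2[of T t]) (use assms in auto)
  moreover have "0 < card T"
    using assms by (auto simp: card_gt_0_iff)
  ultimately show ?thesis
    by simp
qed

lemma D1_nonneg: "0 \<le> D1 X p Q"
  unfolding D1_def Let_def by (intro divide_nonneg_nonneg sum_nonneg) (auto split: prod.splits)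

lemma D2_nonneg: "0 \<le> D2 X p Q"
  unfolding D2_def Let_def by (intro divide_nonneg_nonneg sum_nonneg) (auto split: prod.splits)

lemma D1_eq_0:
  assumes "\<And>Y A B a b. Y \<in> Q \<Longrightarrow> A \<in> menus X \<Longrightarrow> B \<in> menus X \<Longrightarrow>
      a \<in> A \<inter> B \<inter> Y \<Longrightarrow> b \<in> A \<inter> B \<inter> Y \<Longrightarrow> ratio p A {a} {b} = ratio p B {a} {b}"
  shows "D1 X p Q = 0"
  unfolding D1_def Let_def by (subst sum.neutral) (clarsimp, metis IntI assms, simp)

lemma D2_eq_0:
  assumes "\<And>Y Y' A B. Y \<in> Q \<Longrightarrow> Y' \<in> Q \<Longrightarrow> A \<in> menus X \<Longrightarrow> B \<in> menus X \<Longrightarrow>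
      A \<inter> Y = B \<inter> Y \<Longrightarrow> A \<inter> Y \<noteq> {} \<Longrightarrow> A \<inter> Y' = B \<inter> Y' \<Longrightarrow> A \<inter> Y' \<noteq> {} \<Longrightarrow>
      ratio p A Y Y' = ratio p B Y Y'"
  shows "D2 X p Q = 0"
  unfolding D2_def Let_def by (subst sum.neutral) (clarsimp, metis IntI assms, simp)

lemma D1_gt_0:
  assumes "finite X" "finite Q" "Y \<in> Q" "A \<in> menus X" "B \<in> menus X"
    and "a \<in> A \<inter> B \<inter> Y" "b \<in> A \<inter> B \<inter> Y"
    and "0 < ratio p A {a} {b}" "0 < ratio p B {a} {b}" "ratio p A {a} {b} \<noteq> ratio p B {a} {b}"
  shows "0 < D1 X p Q"
  unfolding D1_def Let_def
proof (rule sum_divide_card_gt_0[where t = "(Y, A, B, a, b)"])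
  show "finite {(Y, A, B, a, b). Y \<in> Q \<and> A \<in> menus X \<and> B \<in> menus X \<and>
      a \<in> A \<inter> B \<inter> Y \<and> b \<in> A \<inter> B \<inter> Y}"
    by (rule finite_subset[of _ "Q \<times> menus X \<times> menus X \<times> X \<times> X"])
      (use assms(1,2) menus_finite in \<open>auto simp: menus_def\<close>)
qed (use assms in \<open>auto split: prod.splits\<close>)

lemma D2_gt_0:
  assumes "finite X" "finite Q" "Y \<in> Q" "Y' \<in> Q" "A \<in> menus X" "B \<in> menus X"
    and "A \<inter> Y = B \<inter> Y" "A \<inter> Y \<noteq> {}" "A \<inter> Y' = B \<inter> Y'" "A \<inter> Y' \<noteq> {}"
    and "0 < ratio p A Y Y'" "0 < ratio p B Y Y'" "ratio p A Y Y' \<noteq> ratio p B Y Y'"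
  shows "0 < D2 X p Q"
  unfolding D2_def Let_def
proof (rule sum_divide_card_gt_0[where t = "(Y, Y', A, B)"])
  show "finite {(Y, Y', A, B). Y \<in> Q \<and> Y' \<in> Q \<and> A \<in> menus X \<and> B \<in> menus X \<and>
      A \<inter> Y = B \<inter> Y \<and> A \<inter> Y \<noteq> {} \<and> A \<inter> Y' = B \<inter> Y' \<and> A \<inter> Y' \<noteq> {}}"
    by (rule finite_subset[of _ "Q \<times> Q \<times> menus X \<times> menus X"])
      (use assms(1,2) menus_finite in auto)
qed (use assms in \<open>auto split: prod.splits\<close>)

lemma tendsto_ln_ratio:
  assumes lim: "\<And>a. a \<in> X \<Longrightarrow> ((\<lambda>x. p x a A) \<longlongrightarrow> q a A) F"
    and "B \<subseteq> X" "C \<subseteq> X" "0 < setp q B A" "0 < setp q C A"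
  shows "((\<lambda>x. ln (ratio (p x) A B C)) \<longlongrightarrow> ln (ratio q A B C)) F"
proof -
  have setp: "((\<lambda>x. setp (p x) Y A) \<longlongrightarrow> setp q Y A) F" if "Y \<subseteq> X" for Y
    unfolding setp_def by (rule tendsto_sum) (use lim that in blast)
  show ?thesis
    unfolding ratio_def using assms
    by (intro tendsto_ln tendsto_divide setp) auto
qed

lemma tendsto_D:
  assumes Q: "partition_on X Q"
    and lim: "\<And>A a. A \<in> menus X \<Longrightarrow> a \<in> X \<Longrightarrow> ((\<lambda>x. p x a A) \<longlongrightarrow> q a A) F"
    and pos: "\<And>A Y. A \<in> menus X \<Longrightarrow> Y \<subseteq> X \<Longrightarrow> A \<inter> Y \<noteq> {} \<Longrightarrow> 0 < setp q Y A"
  shows "((\<lambda>x. D X (p x) Q) \<longlongrightarrow> D X q Q) F"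
proof -
  have QX: "Y \<subseteq> X" if "Y \<in> Q" for Y
    using Q that by (auto simp: partition_on_def)
  have ln_ratio: "((\<lambda>x. ln (ratio (p x) A B C)) \<longlongrightarrow> ln (ratio q A B C)) F"
    if "A \<in> menus X" "B \<subseteq> X" "C \<subseteq> X" "A \<inter> B \<noteq> {}" "A \<inter> C \<noteq> {}" for A B C
    using that by (intro tendsto_ln_ratio[where X = X] lim pos)
  have "((\<lambda>x. D1 X (p x) Q) \<longlongrightarrow> D1 X q Q) F"
    unfolding D1_def Let_def divide_inverse
    by (intro tendsto_mult_right tendsto_sum, clarify,
        intro tendsto_power tendsto_diff ln_ratio) (auto simp: menus_def)
  moreover have "((\<lambda>x. D2 X (p x) Q) \<longlongrightarrow> D2 X q Q) F"
    unfolding D2_def Let_def divide_inverse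
    by (intro tendsto_mult_right tendsto_sum, clarify,
        intro tendsto_power tendsto_diff ln_ratio) (auto dest: QX)
  ultimately show ?thesis
    unfolding D_def by (rule tendsto_add)
qed

lemma eventually_strict_minimizer:
  assumes "finite X" "partition_on X P"
    and lim: "\<And>A a. A \<in> menus X \<Longrightarrow> a \<in> X \<Longrightarrow> ((\<lambda>x. p x a A) \<longlongrightarrow> q a A) F"
    and pos: "\<And>A Y. A \<in> menus X \<Longrightarrow> Y \<subseteq> X \<Longrightarrow> A \<inter> Y \<noteq> {} \<Longrightarrow> 0 < setp q Y A"
    and min: "\<And>Q. partition_on X Q \<Longrightarrow> Q \<noteq> P \<Longrightarrow> D X q P < D X q Q"
  shows "eventually (\<lambda>x. \<forall>Q. partition_on X Q \<and> Q \<noteq> P \<longrightarrow> D X (p x) P < D X (p x) Q) F"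
proof -
  have "eventually (\<lambda>x. D X (p x) P < D X (p x) Q) F"
    if "Q \<in> {Q. partition_on X Q \<and> Q \<noteq> P}" for Q
  proof -
    have "((\<lambda>x. D X (p x) Q - D X (p x) P) \<longlongrightarrow> D X q Q - D X q P) F"
      using that assms(2) by (intro tendsto_diff tendsto_D lim pos) auto
    moreover have "0 < D X q Q - D X q P"
      using that min by simp
    ultimately have "eventually (\<lambda>x. 0 < D X (p x) Q - D X (p x) P) F"
      by (rule order_tendstoD(1))
    then show ?thesis
      by (rule eventually_mono) simp
  qed
  then have "eventually (\<lambda>x. \<forall>Q\<in>{Q. partition_on X Q \<and> Q \<noteq> P}. D X (p x) P < D X (p x) Q) F"
    using finitely_many_partition_on[OF assms(1)] by (intro eventually_ball_finite) auto
  then show ?thesis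
    by (rule eventually_mono) blast
qed

section \<open>Identification of the partition from nested stochastic choice\<close>

lemma block_of_eq:
  assumes "partition_on X P" "Y \<in> P" "a \<in> Y"
  shows "block_of P a = Y"
  unfolding block_of_def
proof (rule the_equality)
  fix Z assume "Z \<in> P \<and> a \<in> Z"
  then show "Z = Y"
    using assms disjointD[OF partition_onD2[OF assms(1)]] by blast
qed (use assms in auto)

lemma refines_block_subset:
  assumes "refines X Q P" "Y \<in> Q" "Z \<in> P" "a \<in> Y" "a \<in> Z"
  shows "Y \<subseteq> Z"
proof -
  obtain Z' where "Z' \<in> P" "Y \<subseteq> Z'"
    using assms(1,2) by (auto simp: refines_def)
  moreover have "Z' = Z"
    using calculation assms(1,3-5) by (metis block_of_eq refines_def subsetD)
  ultimately show ?thesis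
    by simp
qed

lemma singleton_degenerate: "degenerate_block v u {a}"
  unfolding degenerate_block_def
proof (intro bexI[of _ a] allI impI)
  fix Ai assume "Ai \<subseteq> {a} \<and> a \<in> Ai"
  then have "Ai = {a}"
    by blast
  then show "sum u Ai / v Ai = u a / v {a}"
    by simp
qed simp

lemma nondegenerate_singleton_blocks_eq:
  assumes "nondegenerate P v u" "finite P" "{a} \<in> P" "{b} \<in> P"
  shows "a = b"
proof -
  have "card {{a}, {b}} \<le> card {Xi \<in> P. degenerate_block v u Xi}"
    using assms(2-4) singleton_degenerate by (intro card_mono) auto
  with assms(1) have "{a} = {b}"
    by (auto simp: nondegenerate_def card_insert_if split: if_splits)
  then show ?thesis
    by simp
qed

lemma assumption1_ratio_differs:
  assumes A1: "assumption1 X P p" and "X1 \<in> P" "X2 \<in> P" "X1 \<noteq> X2" "a \<in> X1" "b \<in> X2"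
    and "X1 \<noteq> {a} \<or> X2 \<noteq> {b}"
  shows "\<exists>A\<in>menus X. \<exists>B\<in>menus X. {a, b} \<subseteq> A \<inter> B \<and> ratio p A {a} {b} \<noteq> ratio p B {a} {b}"
  using assms(7)
proof
  assume "X1 \<noteq> {a}"
  then have "{a} \<subset> X1"
    using assms(5) by auto
  then show ?thesis
    using A1[unfolded assumption1_def, rule_format, of X1 X2 "{a}" "{b}"] assms(2-4,6) by (simp; blast)
next
  assume "X2 \<noteq> {b}"
  then have "{b} \<subset> X2"
    using assms(6) by auto
  then have "\<exists>A\<in>menus X. \<exists>B\<in>menus X. {b, a} \<subseteq> A \<inter> B \<and> ratio p A {b} {a} \<noteq> ratio p B {b} {a}"
    using A1[unfolded assumption1_def, rule_format, of X2 X1 "{b}" "{a}"] assms(2-5) by (simp; blast)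
  moreover have "ratio p C {b} {a} = inverse (ratio p C {a} {b})" for C
    by (simp add: ratio_def)
  ultimately show ?thesis
    by (simp; blast)
qed

locale nsc_model =
  fixes X :: "'a set" and P :: "'a set set" and v :: "'a set \<Rightarrow> real" and u :: "'a \<Rightarrow> real"
  assumes finite_X: "finite X" and partition: "partition_on X P"
    and u_pos: "\<forall>a\<in>X. 0 < u a" and v_empty: "v {} = 0"
    and nsc_pos: "\<forall>A\<in>menus X. \<forall>a\<in>A. 0 < nsc P v u a A"
begin

abbreviation pbar :: "'a \<Rightarrow> 'a set \<Rightarrow> real" where
  "pbar \<equiv> nsc P v u"

lemma finite_P: "finite P"
  using finite_elements[OF finite_X partition] .

lemma block_subset: "Y \<in> P \<Longrightarrow> Y \<subseteq> X"
  using partition by (auto simp: partition_on_def)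

lemma nsc_nonneg: "A \<in> menus X \<Longrightarrow> 0 \<le> pbar a A"
  using nsc_pos by (cases "a \<in> A") (auto simp: nsc_def intro: less_imp_le)

lemma setp_nsc_pos:
  assumes "A \<in> menus X" "Y \<subseteq> X" "A \<inter> Y \<noteq> {}"
  shows "0 < setp pbar Y A"
proof -
  obtain a where "a \<in> A \<inter> Y"
    using assms(3) by blast
  then show ?thesis
    unfolding setp_def using assms finite_subset[OF assms(2) finite_X] nsc_pos nsc_nonneg
    by (intro sum_pos2[of Y a]) auto
qed

lemma ratio_nsc_pos:
  "A \<in> menus X \<Longrightarrow> B \<subseteq> X \<Longrightarrow> C \<subseteq> X \<Longrightarrow> A \<inter> B \<noteq> {} \<Longrightarrow> A \<inter> C \<noteq> {} \<Longrightarrow>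
    0 < ratio pbar A B C"
  unfolding ratio_def by (simp add: setp_nsc_pos)

lemma nsc_in_block:
  assumes "Y \<in> P" "a \<in> A \<inter> Y"
  shows "pbar a A = v (A \<inter> Y) / (\<Sum>Z\<in>P. v (A \<inter> Z)) * (u a / (\<Sum>b\<in>A \<inter> Y. u b))"
  using assms block_of_eq[OF partition] by (simp add: nsc_def)

lemma setp_nsc_block:
  assumes A: "A \<in> menus X" and Y: "Y \<in> P"
  shows "setp pbar Y A = v (A \<inter> Y) / (\<Sum>Z\<in>P. v (A \<inter> Z))"
proof (cases "A \<inter> Y = {}")
  case True
  then have "setp pbar Y A = 0"
    unfolding setp_def by (intro sum.neutral) (auto simp: nsc_def)
  with True show ?thesis
    by (simp add: v_empty)
next
  case False
  have fin: "finite Y"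
    using finite_subset[OF block_subset[OF Y] finite_X] .
  have U: "0 < (\<Sum>b\<in>A \<inter> Y. u b)"
    using False fin A u_pos by (intro sum_pos) (auto simp: menus_def)
  have "setp pbar Y A = (\<Sum>a\<in>A \<inter> Y. pbar a A)"
    unfolding setp_def using fin by (intro sum.mono_neutral_right) (auto simp: nsc_def)
  also have "\<dots> = (\<Sum>a\<in>A \<inter> Y. v (A \<inter> Y) / (\<Sum>Z\<in>P. v (A \<inter> Z)) * (u a / (\<Sum>b\<in>A \<inter> Y. u b)))"
    by (rule sum.cong) (simp_all add: nsc_in_block[OF Y])
  also have "\<dots> = v (A \<inter> Y) / (\<Sum>Z\<in>P. v (A \<inter> Z)) * ((\<Sum>a\<in>A \<inter> Y. u a) / (\<Sum>b\<in>A \<inter> Y. u b))"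
    by (simp only: sum_distrib_left sum_divide_distrib)
  finally show ?thesis
    using U by simp
qed

lemma sum_nsc_eq_1:
  assumes A: "A \<in> menus X"
  shows "(\<Sum>a\<in>A. pbar a A) = 1"
proof -
  obtain a where a: "a \<in> A"
    using A by (auto simp: menus_def)
  have norm: "(\<Sum>Z\<in>P. v (A \<inter> Z)) \<noteq> 0"
    using nsc_pos A a by (auto simp: nsc_def)
  have "(\<Sum>a\<in>A. pbar a A) = setp pbar X A"
    unfolding setp_def using A finite_X
    by (intro sum.mono_neutral_left) (auto simp: menus_def nsc_def)
  also have "\<dots> = (\<Sum>Y\<in>P. setp pbar Y A)"
    unfolding setp_def by (rule sum.partition[OF finite_X partition])
  also have "\<dots> = (\<Sum>Y\<in>P. v (A \<inter> Y) / (\<Sum>Z\<in>P. v (A \<inter> Z)))"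
    by (simp add: setp_nsc_block[OF A])
  also have "\<dots> = (\<Sum>Y\<in>P. v (A \<inter> Y)) / (\<Sum>Z\<in>P. v (A \<inter> Z))"
    by (rule sum_divide_distrib[symmetric])
  finally show ?thesis
    using norm by simp
qed

lemma measure_choice_eq_nsc:
  assumes "prob_space M" and Z: "Z \<in> measurable M (count_space X)" and A: "A \<in> menus X"
    and law: "\<forall>a\<in>A. measure M {w \<in> space M. Z w = a} = pbar a A" and "a \<in> X"
  shows "measure M {w \<in> space M. Z w = a} = pbar a A"
proof (cases "a \<in> A")
  case False
  interpret prob_space M
    by fact
  have "finite A"
    using A finite_X by (auto simp: menus_def intro: finite_subset)
  moreover have "(\<Sum>b\<in>A. prob {w \<in> space M. Z w = b}) = 1"
    using law sum_nsc_eq_1[OF A] by simp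
  ultimately have "prob {w \<in> space M. Z w = a} = 0"
    using Z False by (intro prob_eq_0_if_sum_prob_eq_1)
  then show ?thesis
    using False by (simp add: nsc_def)
qed (use law in auto)

lemma ratio_nsc_same_block:
  assumes A: "A \<in> menus X" and Y: "Y \<in> P" and ab: "a \<in> A \<inter> Y" "b \<in> A \<inter> Y"
  shows "ratio pbar A {a} {b} = u a / u b"
proof -
  have "0 < pbar a A"
    using nsc_pos A ab by auto
  then have "v (A \<inter> Y) / (\<Sum>Z\<in>P. v (A \<inter> Z)) \<noteq> 0" "(\<Sum>b\<in>A \<inter> Y. u b) \<noteq> 0"
    using nsc_in_block[OF Y ab(1)] by auto
  moreover have "u b \<noteq> 0"
    using u_pos ab block_subset[OF Y] by force
  ultimately show ?thesis
    by (simp add: ratio_def setp_def nsc_in_block[OF Y ab(1)] nsc_in_block[OF Y ab(2)])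
qed

lemma ratio_nsc_blocks:
  assumes A: "A \<in> menus X" and Y: "Y \<in> P" "Y' \<in> P" and "A \<inter> Y \<noteq> {}"
  shows "ratio pbar A Y Y' = v (A \<inter> Y) / v (A \<inter> Y')"
proof -
  have "0 < setp pbar Y A"
    using assms block_subset by (intro setp_nsc_pos) auto
  then have "(\<Sum>Z\<in>P. v (A \<inter> Z)) \<noteq> 0"
    by (auto simp: setp_nsc_block[OF A Y(1)])
  then show ?thesis
    by (simp add: ratio_def setp_nsc_block[OF A Y(1)] setp_nsc_block[OF A Y(2)])
qed

lemma D_nsc_true_partition: "D X pbar P = 0"
proof -
  have "D1 X pbar P = 0"
    by (rule D1_eq_0) (auto simp: ratio_nsc_same_block)
  moreover have "D2 X pbar P = 0"
    by (rule D2_eq_0) (metis ratio_nsc_blocks)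
  ultimately show ?thesis
    by (simp add: D_def)
qed

end

locale identified_nsc_model = nsc_model +
  assumes two_blocks: "2 \<le> card P" and nondegenerate: "nondegenerate P v u"
    and assumption1: "assumption1 X P (nsc P v u)"
begin

lemma menus_nonempty: "menus X \<noteq> {}"
proof -
  obtain Y where "Y \<in> P"
    using two_blocks by fastforce
  then have "Y \<in> menus X"
    using partition by (auto simp: menus_def partition_on_def)
  then show ?thesis
    by blast
qed

lemma D1_nsc_gt_0_if_not_refines:
  assumes Q: "partition_on X Q" and not_refines: "\<not> refines X Q P"
  shows "0 < D1 X pbar Q"
proof -
  obtain Y where Y: "Y \<in> Q" and not_sub: "\<forall>Z\<in>P. \<not> Y \<subseteq> Z"
    using not_refines Q partition by (auto simp: refines_def)
  have YX: "Y \<subseteq> X"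
    using Q Y by (auto simp: partition_on_def)
  obtain a where a: "a \<in> Y"
    using partition_onD3[OF Q] Y by (metis all_not_in_conv)
  obtain X1 where X1: "X1 \<in> P" "a \<in> X1"
    using partition_onD1[OF partition] a YX by blast
  obtain b where b: "b \<in> Y" "b \<notin> X1"
    using not_sub X1(1) by blast
  obtain X2 where X2: "X2 \<in> P" "b \<in> X2"
    using partition_onD1[OF partition] b YX by blast
  have "X1 \<noteq> X2"
    using b X2 by blast
  moreover have "X1 \<noteq> {a} \<or> X2 \<noteq> {b}"
    using nondegenerate_singleton_blocks_eq[OF nondegenerate finite_P] X1 X2 b by blast
  ultimately obtain A B where AB: "A \<in> menus X" "B \<in> menus X" "{a, b} \<subseteq> A \<inter> B"
    and differ: "ratio pbar A {a} {b} \<noteq> ratio pbar B {a} {b}"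
    using assumption1_ratio_differs[OF assumption1 X1(1) X2(1) _ X1(2) X2(2)] by blast
  have "0 < ratio pbar A {a} {b}" "0 < ratio pbar B {a} {b}"
    using AB a b YX by (auto intro!: ratio_nsc_pos)
  with AB differ a b show ?thesis
    by (intro D1_gt_0[OF finite_X finite_elements[OF finite_X Q] Y, of A B a b]) auto
qed

lemma D2_nsc_gt_0_if_strictly_refines:
  assumes Q: "partition_on X Q" and refines: "refines X Q P" and "Q \<noteq> P"
  shows "0 < D2 X pbar Q"
proof -
  have "\<not> refines X P Q"
    using refines assms(3) refines_asym by blast
  then obtain X1 where X1: "X1 \<in> P" and not_sub: "\<forall>Y\<in>Q. \<not> X1 \<subseteq> Y"
    using Q partition by (auto simp: refines_def)
  obtain a where a: "a \<in> X1"
    using partition_onD3[OF partition] X1 by (metis all_not_in_conv)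
  obtain Y1 where Y1: "Y1 \<in> Q" "a \<in> Y1"
    using partition_onD1[OF Q] a block_subset[OF X1] by blast
  have Y1_X1: "Y1 \<subset> X1"
    using refines_block_subset[OF refines Y1(1) X1 Y1(2) a] not_sub Y1(1) by blast
  obtain X2 where X2: "X2 \<in> P" "X2 \<noteq> X1"
    using two_blocks by (metis card_le_Suc0_iff_eq finite_P not_less_eq_eq numeral_2_eq_2)
  obtain b where b: "b \<in> X2"
    using partition_onD3[OF partition] X2(1) by (metis all_not_in_conv)
  obtain Y2 where Y2: "Y2 \<in> Q" "b \<in> Y2"
    using partition_onD1[OF Q] b block_subset[OF X2(1)] by blast
  have Y2_X2: "Y2 \<subseteq> X2"
    using refines_block_subset[OF refines Y2(1) X2(1) Y2(2) b] .
  obtain A B where AB: "A \<in> menus X" "B \<in> menus X" "Y1 \<union> Y2 \<subseteq> A \<inter> B"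
    and differ: "ratio pbar A Y1 Y2 \<noteq> ratio pbar B Y1 Y2"
    using assumption1[unfolded assumption1_def, rule_format, of X1 X2 Y1 Y2] X1 X2 Y1 Y2 Y1_X1 Y2_X2
    by blast
  have Y12X: "Y1 \<subseteq> X" "Y2 \<subseteq> X"
    using Y1_X1 Y2_X2 block_subset[OF X1] block_subset[OF X2(1)] by auto
  have "0 < ratio pbar A Y1 Y2" "0 < ratio pbar B Y1 Y2"
    using AB Y1 Y2 Y12X by (auto intro!: ratio_nsc_pos)
  with AB differ Y1 Y2 show ?thesis
    by (intro D2_gt_0[OF finite_X finite_elements[OF finite_X Q] Y1(1) Y2(1), of A B]) auto
qed

lemma D_nsc_gt_0:
  assumes "partition_on X Q" "Q \<noteq> P"
  shows "0 < D X pbar Q"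
proof (cases "refines X Q P")
  case True
  then show ?thesis
    using D2_nsc_gt_0_if_strictly_refines[OF assms(1) True assms(2)] D1_nonneg[of X pbar Q] by (simp add: D_def)
next
  case False
  then show ?thesis
    using D1_nsc_gt_0_if_not_refines[OF assms(1) False] D2_nonneg[of X pbar Q] by (simp add: D_def)
qed

lemma true_partition_eventually_unique_minimizer:
  assumes conv: "\<forall>A\<in>menus X. \<forall>a\<in>X.
    (\<lambda>n. card {k. k < n \<and> xi A k w = a} / n) \<longlonglongrightarrow> pbar a A"
  shows "\<exists>N0. \<forall>N. (\<forall>A\<in>menus X. N0 \<le> N A) \<longrightarrow>
    (\<forall>Q. partition_on X Q \<and> Q \<noteq> P \<longrightarrow> D X (freq xi N w) P < D X (freq xi N w) Q)"
proof -
  let ?F = "filtercomap (\<lambda>N. Min (N ` menus X)) at_top"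
  have "((\<lambda>N. freq xi N w a A) \<longlongrightarrow> pbar a A) ?F" if "A \<in> menus X" "a \<in> X" for A a
    unfolding freq_def using conv that menus_finite[OF finite_X]
    by (intro filterlim_compose[OF _ filterlim_filtercomap_Min_at_top]) auto
  then have "eventually (\<lambda>N. \<forall>Q. partition_on X Q \<and> Q \<noteq> P \<longrightarrow>
      D X (freq xi N w) P < D X (freq xi N w) Q) ?F"
    by (rule eventually_strict_minimizer[OF finite_X partition _ setp_nsc_pos])
      (simp_all add: D_nsc_true_partition D_nsc_gt_0)
  then show ?thesis
    by (rule eventually_filtercomap_Min_at_top[OF menus_finite[OF finite_X] menus_nonempty])
qed

end

theorem proposition4:
  fixes X :: "'a set" and P :: "'a set set"
    and v :: "'a set \<Rightarrow> real" and u :: "'a \<Rightarrow> real"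
    and M :: "'w measure" and xi :: "'a set \<Rightarrow> nat \<Rightarrow> 'w \<Rightarrow> 'a"
  assumes finX: "finite X"
    and part: "partition_on X P"
    and K2: "card P \<ge> 2"
    and upos: "\<forall>a\<in>X. u a > 0"
    and v0: "v {} = 0"
    and pbar_pos: "\<forall>A\<in>menus X. \<forall>a\<in>A. nsc P v u a A > 0"
    and nondeg: "nondegenerate P v u"
    and A1: "assumption1 X P (nsc P v u)"
    and prob: "prob_space M"
    and indep: "prob_space.indep_vars M (\<lambda>_. count_space X) (\<lambda>(A, n). xi A n) (menus X \<times> UNIV)"
    and distr: "\<forall>A\<in>menus X. \<forall>n. \<forall>a\<in>A.
                  measure M {w \<in> space M. xi A n w = a} = nsc P v u a A"
  shows "AE w in M. \<exists>N0. \<forall>N :: 'a set \<Rightarrow> nat. (\<forall>A\<in>menus X. N A \<ge> N0) \<longrightarrow>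
           (\<forall>Q. partition_on X Q \<and> Q \<noteq> P \<longrightarrow> D X (freq xi N w) P < D X (freq xi N w) Q)"
proof -
  interpret identified_nsc_model X P v u
    using assms by unfold_locales auto
  interpret prob_space M
    by (rule prob)
  have "AE w in M. (\<lambda>n. card {k. k < n \<and> xi A k w = a} / n) \<longlonglongrightarrow> pbar a A"
    if A: "A \<in> menus X" and a: "a \<in> X" for A a
  proof -
    have "xi A k \<in> measurable M (count_space X)" for k
      using indep A unfolding indep_vars_def by force
    then have "prob {w \<in> space M. xi A k w = a} = pbar a A" for k
      using distr A a by (intro measure_choice_eq_nsc[OF prob]) auto
    then show ?thesis
      using AE_frequency_tendsto[OF indep, of "Pair A" a "pbar a A"] A
      by (simp add: inj_def image_subset_iff)
  qed
  then have "AE w in M. \<forall>A\<in>menus X. \<forall>a\<in>X.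
      (\<lambda>n. card {k. k < n \<and> xi A k w = a} / n) \<longlonglongrightarrow> pbar a A"
    by (intro AE_finite_allI menus_finite finX)
  then show ?thesis
    by (rule eventually_mono) (rule true_partition_eventually_unique_minimizer)
qed

end
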